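(* Let $m\ge 1$ and $n$ be integers with $\binom{m+1}{2}\le n\le J(m)$, where $J(m)=\sum_{j=1}^m j\lfloor m/j\rfloor$. Then there exist symmetric Knowlton-Graham partitions of $\{1,\ldots,n\}$ of order $m$. Equivalently, there is a symmetric $m\times m$ matrix with entries in $\{0,1\}$ whose row sums $(t_1,\ldots,t_m)$ (which equal its column sums) satisfy $j\mid t_j$ and $t_j\ge 1$ for all $1\le j\le m$, $t_m=m$, and $t_1+\cdots+t_m=n$. *)

theory Defs
  imports Main
begin

definition J :: "nat \<Rightarrow> nat" where
  "J m = (\<Sum>j=1..m. j * (m div j))"

end

theory Submission
  imports Defs
begin

(* Sort the vertices by their prescribed row sums w 0 <= ... <= w (N - 1). A Hankel matrix
   [i + j : A] then has as i-th row sum the number of elements of A in the window [i, i + N),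
   and a set A with prescribed window counts exists as soon as w grows in unit steps and
   w (N - 1) <= N. Hence any row-sum vector bounded by m whose values leave no gap between
   themselves and m is realised by a symmetric 0/1 matrix. The vectors t 1 = a,
   t k = k * (m div k) for 2 <= k <= p and t k = k for k > p, with 2 p <= m + 1 and
   p <= a <= m, are of this kind and satisfy k dvd t k, t k >= 1 and t m = m; as p grows
   their totals run through overlapping intervals that cover [(m+1) choose 2, J m]. *)

lemma sum_unit_increments:
  fixes C :: "nat \<Rightarrow> nat"
  assumes "\<And>y. y < n \<Longrightarrow> C y \<le> C (Suc y) \<and> C (Suc y) \<le> Suc (C y)"
  shows "(\<Sum>y<n. of_bool (C (Suc y) = Suc (C y))) + C 0 = C n"
  using assms by (induction n) (force simp: le_Suc_eq)+

lemma window_count_shift: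
  "(\<Sum>y<N. of_bool (Suc x + y \<in> A)) + of_bool (x \<in> A)
     = (\<Sum>y<N. of_bool (x + y \<in> A)) + (of_bool (x + N \<in> A) :: nat)"
  using sum.lessThan_Suc[of "\<lambda>y. of_bool (x + y \<in> A) :: nat" N]
    sum.lessThan_Suc_shift[of "\<lambda>y. of_bool (x + y \<in> A) :: nat" N]
  by (simp del: sum_of_bool_eq)

lemma hankel_window_counts:
  fixes w :: "nat \<Rightarrow> nat"
  assumes steps: "\<And>x. Suc x < N \<Longrightarrow> w x \<le> w (Suc x) \<and> w (Suc x) \<le> Suc (w x)"
    and last: "w (N - 1) \<le> N"
  shows "\<exists>A. \<forall>x<N. (\<Sum>y<N. of_bool (x + y \<in> A)) = w x"
proof -
  define up where "up = {x. Suc x < N \<and> w (Suc x) = Suc (w x)}"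
  have "up = {..<N - 1} \<inter> {x. w (Suc x) = Suc (w x)}"
    unfolding up_def by auto
  then have "card up + w 0 = w (N - 1)"
    using sum_unit_increments[of "N - 1" w] steps by simp
  moreover have "up \<subseteq> {..<N}"
    unfolding up_def by auto
  then have "card ({..<N} - up) = N - card up"
    by (simp add: card_Diff_subset finite_subset)
  ultimately have "w 0 \<le> card ({..<N} - up)"
    using last by linarith
  then obtain A0 where A0: "A0 \<subseteq> {..<N} - up" "card A0 = w 0"
    by (meson obtain_subset_with_card_n)
  \<comment> \<open>\<open>x + N\<close> enters the window exactly when \<open>x\<close> leaves it or \<open>w\<close> steps up at \<open>x\<close>\<close>
  define A where "A = A0 \<union> (\<lambda>x. x + N) ` (A0 \<union> up)"
  have low: "{..<N} \<inter> A = A0"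
    using A0(1) unfolding A_def by auto
  have high: "of_bool (x + N \<in> A) = of_bool (x \<in> A) + (of_bool (x \<in> up) :: nat)" if "x < N" for x
    using that A0(1) unfolding A_def by auto
  have "(\<Sum>y<N. of_bool (x + y \<in> A)) = w x" if "x < N" for x
    using that
  proof (induction x)
    case 0
    then show ?case
      using low A0(2) by (simp add: Int_commute)
  next
    case (Suc x)
    have "w (Suc x) = w x + of_bool (x \<in> up)"
      using steps[OF Suc.prems] Suc.prems unfolding up_def by auto
    then show ?case
      using window_count_shift[where N = N and x = x and A = A] high[of x] Suc by simp
  qed
  then show ?thesis by blast
qed

lemma symmetric_01_matrix_with_row_sums:
  fixes t :: "'a \<Rightarrow> nat"
  assumes "finite V"
    and bounded: "\<And>v. v \<in> V \<Longrightarrow> t v \<le> card V"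
    and gap_free: "\<And>v y. v \<in> V \<Longrightarrow> t v < y \<Longrightarrow> y \<le> card V \<Longrightarrow> \<exists>u\<in>V. t u = y"
  shows "\<exists>M :: 'a \<Rightarrow> 'a \<Rightarrow> nat. (\<forall>u\<in>V. \<forall>v\<in>V. M u v \<in> {0, 1} \<and> M u v = M v u) \<and>
           (\<forall>u\<in>V. (\<Sum>v\<in>V. M u v) = t u)"
proof (cases "V = {}")
  case False
  define N where "N = card V"
  obtain xs where "distinct xs" "set xs = V"
    using \<open>finite V\<close> finite_distinct_list by blast
  define vs where "vs = sort_key t xs"
  have vs: "distinct vs" "set vs = V" "length vs = N" "sorted (map t vs)"
    using \<open>distinct xs\<close> \<open>set xs = V\<close> distinct_card[of vs] unfolding vs_def N_def by auto
  have vs_in: "vs ! i \<in> V" if "i < N" for i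
    using that vs nth_mem by blast
  have bij: "bij_betw ((!) vs) {..<N} V"
    using bij_betw_nth vs by blast
  define w where "w i = t (vs ! i)" for i
  have w_mono: "w i \<le> w j" if "i \<le> j" "j < N" for i j
    using sorted_nth_mono[OF vs(4)] that vs(3) unfolding w_def by simp
  have w_steps: "w x \<le> w (Suc x) \<and> w (Suc x) \<le> Suc (w x)" if x: "Suc x < N" for x
  proof (intro conjI w_mono)
    show "w (Suc x) \<le> Suc (w x)"
    proof (rule ccontr)
      assume jump: "\<not> w (Suc x) \<le> Suc (w x)"
      moreover have "w (Suc x) \<le> N"
        using bounded vs_in x unfolding w_def N_def by blast
      ultimately obtain u where "u \<in> V" "t u = Suc (w x)"
        using gap_free[of "vs ! x" "Suc (w x)"] vs_in x unfolding w_def N_def by auto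
      then obtain l where "l < N" "w l = Suc (w x)"
        using vs unfolding w_def by (metis in_set_conv_nth)
      then show False
        using w_mono[of l x] w_mono[of "Suc x" l] x jump by (cases "l \<le> x") auto
    qed
  qed (use x in auto)
  have w_last: "w (N - 1) \<le> N"
    using bounded vs_in False \<open>finite V\<close> unfolding w_def N_def by (simp add: card_gt_0_iff)
  obtain A where A: "\<forall>x<N. (\<Sum>y<N. of_bool (x + y \<in> A)) = w x"
    using hankel_window_counts[OF w_steps w_last] by blast
  define pos where "pos = the_inv_into {..<N} ((!) vs)"
  have pos_nth: "pos (vs ! i) = i" if "i < N" for i
    using bij that unfolding pos_def by (simp add: bij_betw_def the_inv_into_f_f)
  define M :: "'a \<Rightarrow> 'a \<Rightarrow> nat" where "M u v = of_bool (pos u + pos v \<in> A)" for u v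
  have "(\<Sum>v\<in>V. M u v) = t u" if "u \<in> V" for u
  proof -
    obtain i where i: "i < N" "vs ! i = u"
      using \<open>u \<in> V\<close> vs by (metis in_set_conv_nth)
    have "(\<Sum>v\<in>V. M u v) = (\<Sum>j<N. M u (vs ! j))"
      using sum.reindex_bij_betw[OF bij, of "M u"] by simp
    also have "\<dots> = (\<Sum>j<N. of_bool (i + j \<in> A))"
      using pos_nth i unfolding M_def by (intro sum.cong) auto
    also have "\<dots> = t u"
      using A i unfolding w_def by (simp del: sum_of_bool_eq)
    finally show ?thesis .
  qed
  moreover have "M u v = M v u" for u v
    unfolding M_def by (simp add: add.commute)
  moreover have "M u v \<in> {0, 1}" for u v
    unfolding M_def by simp
  ultimately show ?thesis
    by blast
qed auto

lemma overlapping_intervals_cover: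
  fixes lo hi :: "nat \<Rightarrow> nat"
  assumes "\<And>i. i < q \<Longrightarrow> lo (Suc i) \<le> Suc (hi i)"
    and "lo 0 \<le> n" "n \<le> hi q"
  shows "\<exists>i\<le>q. lo i \<le> n \<and> n \<le> hi i"
  using assms
proof (induction q)
  case (Suc q)
  show ?case
  proof (cases "n \<le> hi q")
    case True
    then show ?thesis
      using Suc by (metis le_SucI less_SucI)
  next
    case False
    then show ?thesis
      using Suc.prems(1)[of q] Suc.prems(3) by force
  qed
qed auto

definition profile :: "nat \<Rightarrow> nat \<Rightarrow> nat \<Rightarrow> nat \<Rightarrow> nat" where
  "profile m p a k = (if k = 1 then a else if k \<le> p then k * (m div k) else k)"

definition profile_tail :: "nat \<Rightarrow> nat \<Rightarrow> nat" where
  "profile_tail m p = (\<Sum>k=2..m. if k \<le> p then k * (m div k) else k)"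

lemma sum_profile:
  assumes "1 \<le> m"
  shows "(\<Sum>k=1..m. profile m p a k) = a + profile_tail m p"
proof -
  have "(\<Sum>k=1..m. profile m p a k) = profile m p a 1 + (\<Sum>k=2..m. profile m p a k)"
    using sum.atLeast_Suc_atMost[OF assms] by (simp add: numeral_2_eq_2)
  also have "(\<Sum>k=2..m. profile m p a k) = profile_tail m p"
    unfolding profile_tail_def profile_def by (intro sum.cong) auto
  finally show ?thesis
    by (simp add: profile_def)
qed

lemma profile_tail_Suc:
  assumes "1 \<le> p" "Suc p \<le> m"
  shows "profile_tail m (Suc p) + Suc p = profile_tail m p + Suc p * (m div Suc p)"
proof -
  define rest where
    "rest q = (\<Sum>k\<in>{2..m} - {Suc p}. if k \<le> q then k * (m div k) else k)" for q
  have "Suc p \<in> {2..m}"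
    using assms by simp
  then have "profile_tail m q = (if Suc p \<le> q then Suc p * (m div Suc p) else Suc p) + rest q" for q
    unfolding profile_tail_def rest_def by (subst sum.remove[OF finite_atLeastAtMost]) simp_all
  moreover have "rest (Suc p) = rest p"
    unfolding rest_def by (intro sum.cong) auto
  ultimately show ?thesis
    by simp
qed

lemma profile_tail_one:
  assumes "1 \<le> m"
  shows "Suc (profile_tail m 1) = (m + 1) choose 2"
proof -
  have "profile_tail m 1 = \<Sum>{2..m}"
    unfolding profile_tail_def by (intro sum.cong) auto
  moreover have "\<Sum>{0..m} = 0 + 1 + \<Sum>{2..m}"
    using assms by (simp add: sum.atLeast_Suc_atMost numeral_2_eq_2)
  ultimately show ?thesis
    using gauss_sum_nat[of m] by (simp add: choose_two)
qed

lemma J_eq_profile_tail: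
  assumes "1 \<le> m"
  shows "J m = profile_tail m ((m + 1) div 2) + m"
proof -
  have "J m = 1 * (m div 1) + (\<Sum>k=2..m. k * (m div k))"
    unfolding J_def using sum.atLeast_Suc_atMost[OF assms, of "\<lambda>k. k * (m div k)"]
    by (simp add: numeral_2_eq_2)
  moreover have "m div k = 1" if "(m + 1) div 2 < k" "k \<le> m" for k
    using that by (intro div_nat_eqI) auto
  then have "(\<Sum>k=2..m. k * (m div k)) = profile_tail m ((m + 1) div 2)"
    unfolding profile_tail_def by (intro sum.cong) auto
  ultimately show ?thesis
    by simp
qed

lemma profile_totals_cover:
  assumes "1 \<le> m" "(m + 1) choose 2 \<le> n" "n \<le> J m"
  shows "\<exists>p a. 1 \<le> p \<and> 2 * p \<le> Suc m \<and> p \<le> a \<and> a \<le> m \<and> n = a + profile_tail m p"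
proof -
  define q where "q = (m + 1) div 2 - 1"
  have "\<exists>i\<le>q. Suc i + profile_tail m (Suc i) \<le> n \<and> n \<le> m + profile_tail m (Suc i)"
  proof (rule overlapping_intervals_cover[where lo = "\<lambda>i. Suc i + profile_tail m (Suc i)"
        and hi = "\<lambda>i. m + profile_tail m (Suc i)"])
    fix i
    assume "i < q"
    then have "profile_tail m (Suc (Suc i)) + Suc (Suc i)
        = profile_tail m (Suc i) + Suc (Suc i) * (m div Suc (Suc i))"
      unfolding q_def by (intro profile_tail_Suc) auto
    then show "Suc (Suc i) + profile_tail m (Suc (Suc i)) \<le> Suc (m + profile_tail m (Suc i))"
      using times_div_less_eq_dividend[of "Suc (Suc i)" m] by linarith
  next
    show "Suc 0 + profile_tail m (Suc 0) \<le> n"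
      using profile_tail_one assms by simp
  next
    have "Suc q = (m + 1) div 2"
      using assms(1) unfolding q_def by simp
    then show "n \<le> m + profile_tail m (Suc q)"
      using J_eq_profile_tail assms by simp
  qed
  then obtain i where "i \<le> q" "Suc i + profile_tail m (Suc i) \<le> n" "n \<le> m + profile_tail m (Suc i)"
    by blast
  then show ?thesis
    unfolding q_def by (intro exI[of _ "Suc i"] exI[of _ "n - profile_tail m (Suc i)"]) auto
qed

lemma profile_dvd: "k dvd profile m p a k"
  unfolding profile_def by auto

context
  fixes m p a :: nat
  assumes p: "1 \<le> p" "2 * p \<le> Suc m"
    and a: "p \<le> a" "a \<le> m"
begin

lemma profile_ge:
  assumes "1 \<le> k"
  shows "p \<le> profile m p a k"
proof (cases "k = 1 \<or> p < k")
  case False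
  have "m mod k < k"
    using assms by simp
  then have "m < k * (m div k) + k"
    using mult_div_mod_eq[of k m] by linarith
  then show ?thesis
    using False p(2) unfolding profile_def by auto
qed (use a in \<open>auto simp: profile_def\<close>)

lemma profile_le: "k \<le> m \<Longrightarrow> profile m p a k \<le> m"
  using a times_div_less_eq_dividend[of k m] unfolding profile_def by auto

lemma profile_beyond: "p < k \<Longrightarrow> profile m p a k = k"
  using p unfolding profile_def by auto

lemma profile_last: "profile m p a m = m"
  using p a unfolding profile_def by auto

end

theorem theorem2:
  fixes m n :: nat
  assumes "m \<ge> 1"
    and "(m + 1) choose 2 \<le> n"
    and "n \<le> J m"
  shows "\<exists>M :: nat \<Rightarrow> nat \<Rightarrow> nat.
           (\<forall>i\<in>{1..m}. \<forall>j\<in>{1..m}. M i j \<in> {0, 1} \<and> M i j = M j i) \<and>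
           (\<forall>j\<in>{1..m}. j dvd (\<Sum>k=1..m. M j k) \<and> (\<Sum>k=1..m. M j k) \<ge> 1) \<and>
           (\<Sum>k=1..m. M m k) = m \<and>
           (\<Sum>j=1..m. \<Sum>k=1..m. M j k) = n"
proof -
  obtain p a where p: "1 \<le> p" "2 * p \<le> Suc m" and a: "p \<le> a" "a \<le> m"
    and n: "n = a + profile_tail m p"
    using profile_totals_cover assms by blast
  let ?t = "profile m p a"
  have gap_free: "\<exists>u\<in>{1..m}. ?t u = y" if "v \<in> {1..m}" "?t v < y" "y \<le> m" for v y
    using that profile_ge[OF p a, of v] profile_beyond[OF p a, of y] p(1) by force
  obtain M :: "nat \<Rightarrow> nat \<Rightarrow> nat"
    where M: "\<forall>i\<in>{1..m}. \<forall>j\<in>{1..m}. M i j \<in> {0, 1} \<and> M i j = M j i"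
      and rows: "\<And>i. i \<in> {1..m} \<Longrightarrow> (\<Sum>j=1..m. M i j) = ?t i"
    using symmetric_01_matrix_with_row_sums[of "{1..m}" ?t] profile_le[OF p a] gap_free by auto
  show ?thesis
  proof (intro exI[of _ M] conjI)
    show "\<forall>i\<in>{1..m}. \<forall>j\<in>{1..m}. M i j \<in> {0, 1} \<and> M i j = M j i"
      by (fact M)
    show "\<forall>j\<in>{1..m}. j dvd (\<Sum>k=1..m. M j k) \<and> (\<Sum>k=1..m. M j k) \<ge> 1"
    proof
      fix j
      assume j: "j \<in> {1..m}"
      then have "p \<le> ?t j"
        by (intro profile_ge[OF p a]) simp
      then show "j dvd (\<Sum>k=1..m. M j k) \<and> (\<Sum>k=1..m. M j k) \<ge> 1"
        using rows[OF j] profile_dvd p(1) by simp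
    qed
    show "(\<Sum>k=1..m. M m k) = m"
      using rows[of m] profile_last[OF p a] assms(1) by simp
    show "(\<Sum>j=1..m. \<Sum>k=1..m. M j k) = n"
      using sum_profile[OF assms(1)] n rows by simp
  qed
qed

end
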